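(* Let $A_1,A_2\in\mathbf{C}^{n\times n}$. The square bimatrix $\{A_1,A_2\}$ is nonsingular if and only if the complex matrix $$\{A_1,A_2\}_\diamond=\begin{bmatrix}A_1 & A_2^{\#}\\ A_2 & A_1^{\#}\end{bmatrix}\in\mathbf{C}^{2n\times 2n}$$ is nonsingular. Moreover, in that case $\{A_1,A_2\}^{-1}=\{A_3,A_4\}$, where $A_3,A_4\in\mathbf{C}^{n\times n}$ are given by $$\begin{bmatrix}A_3\\ A_4\end{bmatrix}=\left(\{A_1,A_2\}_\diamond\right)^{-1}\begin{bmatrix}I_n\\ 0_{n\times n}\end{bmatrix}.$$
   Context: For a complex matrix $P$, $P^{\#}$ denotes its entrywise complex conjugate. For $A_1,A_2\in\mathbf{C}^{n\times m}$, the bimatrix $\{A_1,A_2\}$ is the (real-linear) map $\mathbf{C}^m\to\mathbf{C}^n$, $x\mapsto A_1x+A_2^{\#}x^{\#}$. Two bimatrices are equal if they coincide as maps. The product of bimatrices is composition of maps: $\{A_1,A_2\}\{B_1,B_2\}x=\{A_1,A_2\}(\{B_1,B_2\}x)$; one has $\{A_1,A_2\}\{B_1,B_2\}=\{A_1B_1+A_2^{\#}B_2,\;A_1^{\#}B_2+A_2B_1\}$. The identity bimatrix is $\mathcal{I}_n=\{I_n,0_{n\times n}\}$ (the identity map on $\mathbf{C}^n$). A square bimatrix $\{A_1,A_2\}$ (with $A_1,A_2\in\mathbf{C}^{n\times n}$) is nonsingular if there exists a bimatrix $\{A_3,A_4\}$ with $\{A_1,A_2\}\{A_3,A_4\}=\{A_3,A_4\}\{A_1,A_2\}=\mathcal{I}_n$;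 then $\{A_3,A_4\}$ is called the inverse $\{A_1,A_2\}^{-1}$. *)

theory Defs
  imports "HOL-Analysis.Analysis"
begin

definition cnj_vec :: "complex ^ 'n \<Rightarrow> complex ^ 'n" where
  "cnj_vec x = (\<chi> i. cnj (x $ i))"

definition cnj_mat :: "complex ^ 'm ^ 'n \<Rightarrow> complex ^ 'm ^ 'n" where
  "cnj_mat A = (\<chi> i j. cnj (A $ i $ j))"

definition bimat_app :: "complex ^ 'm ^ 'n \<Rightarrow> complex ^ 'm ^ 'n \<Rightarrow> complex ^ 'm \<Rightarrow> complex ^ 'n" where
  "bimat_app A1 A2 x = A1 *v x + cnj_mat A2 *v cnj_vec x"

definition bimat_is_inverse ::
  "complex ^ 'n ^ 'n \<Rightarrow> complex ^ 'n ^ 'n \<Rightarrow> complex ^ 'n ^ 'n \<Rightarrow> complex ^ 'n ^ 'n \<Rightarrow> bool" where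
  "bimat_is_inverse A1 A2 A3 A4 \<longleftrightarrow>
     (\<forall>x. bimat_app A1 A2 (bimat_app A3 A4 x) = x) \<and>
     (\<forall>x. bimat_app A3 A4 (bimat_app A1 A2 x) = x)"

definition bimat_nonsingular :: "complex ^ 'n ^ 'n \<Rightarrow> complex ^ 'n ^ 'n \<Rightarrow> bool" where
  "bimat_nonsingular A1 A2 \<longleftrightarrow> (\<exists>A3 A4. bimat_is_inverse A1 A2 A3 A4)"

text \<open>The 2n x 2n complex matrix [A1, conj A2; A2, conj A1]; the first block
  of rows/columns is indexed by Inl, the second by Inr.\<close>
definition bimat_diamond ::
  "complex ^ 'n ^ 'n \<Rightarrow> complex ^ 'n ^ 'n \<Rightarrow> complex ^ ('n + 'n) ^ ('n + 'n)" where
  "bimat_diamond A1 A2 = (\<chi> i j. case (i, j) of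
       (Inl a, Inl b) \<Rightarrow> A1 $ a $ b
     | (Inl a, Inr b) \<Rightarrow> cnj (A2 $ a $ b)
     | (Inr a, Inl b) \<Rightarrow> A2 $ a $ b
     | (Inr a, Inr b) \<Rightarrow> cnj (A1 $ a $ b))"

definition id_zero_block :: "complex ^ 'n ^ ('n + 'n)" where
  "id_zero_block = (\<chi> i j. case i of Inl a \<Rightarrow> (if a = j then 1 else 0) | Inr _ \<Rightarrow> 0)"

definition upper_block :: "'a ^ 'm ^ ('n + 'n) \<Rightarrow> 'a ^ 'm ^ 'n" where
  "upper_block M = (\<chi> i j. M $ Inl i $ j)"

definition lower_block :: "'a ^ 'm ^ ('n + 'n) \<Rightarrow> 'a ^ 'm ^ 'n" where
  "lower_block M = (\<chi> i j. M $ Inr i $ j)"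

end

theory Submission
  imports Defs
begin

text \<open>Doubling a vector, x to [x; conj x], turns the real-linear map {A1,A2} into the
  complex-linear map given by the diamond matrix D: it sends [x; conj x] to [y; conj y] with
  y = {A1,A2} x. Doubled vectors span the whole space over the complex numbers, since
  w = [a; conj a] + i [b; conj b] for suitable a, b; so a matrix is determined by its values on
  them, and an inverse {A3,A4} of the bimatrix makes the diamond of {A3,A4} the inverse of D.
  Conversely, D commutes with the conjugate-linear involution [u; v] to [conj v; conj u], hence
  so does its inverse, and applying the inverse to [x; conj x] = [I; 0] x + swap ([I; 0] x)
  shows that it acts on doubled vectors as the bimatrix whose blocks are those of
  D^-1 [I; 0].\<close>

definition double_vec :: "complex ^ ('n::finite) \<Rightarrow> complex ^ ('n + 'n)" where
  "double_vec x = (\<chi> i. case i of Inl a \<Rightarrow> x $ a | Inr a \<Rightarrow> cnj (x $ a))"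

definition swap_cnj_vec :: "complex ^ ('n::finite + 'n) \<Rightarrow> complex ^ ('n + 'n)" where
  "swap_cnj_vec w = (\<chi> i. case i of Inl a \<Rightarrow> cnj (w $ Inr a) | Inr a \<Rightarrow> cnj (w $ Inl a))"

lemma sum_UNIV_sum_type:
  "(\<Sum>i\<in>(UNIV :: ('a::finite + 'b::finite) set). f i) = (\<Sum>a\<in>UNIV. f (Inl a)) + (\<Sum>b\<in>UNIV. f (Inr b))"
  by (subst UNIV_Plus_UNIV [symmetric], subst sum.Plus) (auto simp: o_def)

lemma bimat_diamond_mult_double_vec:
  "bimat_diamond A1 A2 *v double_vec x = double_vec (bimat_app A1 A2 x)"
  by (auto simp: vec_eq_iff matrix_vector_mult_def bimat_diamond_def double_vec_def bimat_app_def
      sum_UNIV_sum_type cnj_mat_def cnj_vec_def split: sum.splits)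

lemma bimat_diamond_mult_swap_cnj_vec:
  "bimat_diamond A1 A2 *v swap_cnj_vec w = swap_cnj_vec (bimat_diamond A1 A2 *v w)"
  by (auto simp: vec_eq_iff matrix_vector_mult_def bimat_diamond_def swap_cnj_vec_def
      sum_UNIV_sum_type split: sum.splits)

lemma inj_double_vec: "inj double_vec"
proof (rule injI)
  fix x y :: "complex ^ 'n"
  assume "double_vec x = double_vec y"
  then have "double_vec x $ Inl k = double_vec y $ Inl k" for k
    by simp
  then show "x = y"
    by (simp add: vec_eq_iff double_vec_def)
qed

lemma double_vec_spanning:
  fixes w :: "complex ^ ('n::finite + 'n)"
  obtains a b where "w = double_vec a + \<i> *s double_vec b"
proof
  show "w = double_vec (\<chi> k. (w $ Inl k + cnj (w $ Inr k)) / 2)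
          + \<i> *s double_vec (\<chi> k. (w $ Inl k - cnj (w $ Inr k)) / (2 * \<i>))"
    by (auto simp: vec_eq_iff double_vec_def field_simps split: sum.splits)
qed

lemma matrix_eq_on_double_vec:
  fixes M N :: "complex ^ ('n::finite + 'n) ^ 'm"
  assumes "\<And>x. M *v double_vec x = N *v double_vec x"
  shows "M = N"
  unfolding matrix_eq
proof
  fix w :: "complex ^ ('n + 'n)"
  obtain a b where w: "w = double_vec a + \<i> *s double_vec b"
    by (rule double_vec_spanning)
  show "M *v w = N *v w"
    by (simp add: w matrix_vector_right_distrib vector_scalar_commute assms)
qed

lemma bimat_diamond_mult_eq_mat_1:
  assumes "\<And>x. bimat_app A1 A2 (bimat_app A3 A4 x) = x"
  shows "bimat_diamond A1 A2 ** bimat_diamond A3 A4 = mat 1"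
proof (rule matrix_eq_on_double_vec)
  fix x
  show "(bimat_diamond A1 A2 ** bimat_diamond A3 A4) *v double_vec x = mat 1 *v double_vec x"
    by (simp add: matrix_vector_mul_assoc [symmetric] bimat_diamond_mult_double_vec assms)
qed

lemma invertible_bimat_diamond_if_bimat_is_inverse:
  assumes "bimat_is_inverse A1 A2 A3 A4"
  shows "invertible (bimat_diamond A1 A2)"
  unfolding invertible_def
proof (intro exI conjI)
  show "bimat_diamond A1 A2 ** bimat_diamond A3 A4 = mat 1"
    "bimat_diamond A3 A4 ** bimat_diamond A1 A2 = mat 1"
    using assms by (simp_all add: bimat_is_inverse_def bimat_diamond_mult_eq_mat_1)
qed

lemma matrix_inv_mult_eq_mat_1:
  assumes "invertible A"
  shows "A ** matrix_inv A = mat 1" "matrix_inv A ** A = mat 1"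
  using someI_ex [OF assms [unfolded invertible_def]] unfolding matrix_inv_def by auto

lemma matrix_inv_mult_commute:
  fixes A :: "'a::field ^ 'n ^ 'n"
  assumes "invertible A" and "\<And>w. A *v f w = f (A *v w)"
  shows "matrix_inv A *v f w = f (matrix_inv A *v w)"
proof -
  have "A *v (matrix_inv A *v v) = v" "matrix_inv A *v (A *v v) = v" for v
    by (simp_all add: matrix_vector_mul_assoc matrix_inv_mult_eq_mat_1 [OF assms(1)])
  then show ?thesis
    by (metis assms(2))
qed

lemma double_vec_eq_id_zero_block:
  "double_vec x = id_zero_block *v x + swap_cnj_vec (id_zero_block *v x)"
  by (auto simp: vec_eq_iff double_vec_def swap_cnj_vec_def id_zero_block_def matrix_vector_mult_def
      if_distrib [of cnj] if_distrib [where f = "\<lambda>c. c * d" for d] cong: if_cong split: sum.splits)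

lemma add_swap_cnj_vec_eq_double_vec:
  "Y *v x + swap_cnj_vec (Y *v x) = double_vec (bimat_app (upper_block Y) (lower_block Y) x)"
  by (auto simp: vec_eq_iff double_vec_def swap_cnj_vec_def matrix_vector_mult_def bimat_app_def
      upper_block_def lower_block_def cnj_mat_def cnj_vec_def split: sum.splits)

lemma matrix_mult_double_vec_if_commute_swap_cnj_vec:
  assumes "\<And>w. M *v swap_cnj_vec w = swap_cnj_vec (M *v w)"
  shows "M *v double_vec x =
    double_vec (bimat_app (upper_block (M ** id_zero_block)) (lower_block (M ** id_zero_block)) x)"
  by (simp add: double_vec_eq_id_zero_block [of x] matrix_vector_right_distrib assms
      matrix_vector_mul_assoc add_swap_cnj_vec_eq_double_vec [symmetric])

lemma bimat_is_inverse_if_invertible_bimat_diamond: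
  assumes "invertible (bimat_diamond A1 A2)"
  shows "bimat_is_inverse A1 A2
           (upper_block (matrix_inv (bimat_diamond A1 A2) ** id_zero_block))
           (lower_block (matrix_inv (bimat_diamond A1 A2) ** id_zero_block))"
    (is "bimat_is_inverse A1 A2 ?A3 ?A4")
proof -
  let ?D = "bimat_diamond A1 A2"
  have inv_double: "matrix_inv ?D *v double_vec x = double_vec (bimat_app ?A3 ?A4 x)" for x
    by (intro matrix_mult_double_vec_if_commute_swap_cnj_vec matrix_inv_mult_commute assms
        bimat_diamond_mult_swap_cnj_vec)
  have D_inv: "?D *v (matrix_inv ?D *v w) = w" "matrix_inv ?D *v (?D *v w) = w" for w
    by (simp_all add: matrix_vector_mul_assoc matrix_inv_mult_eq_mat_1 [OF assms])
  have "double_vec (bimat_app A1 A2 (bimat_app ?A3 ?A4 x)) = ?D *v (matrix_inv ?D *v double_vec x)"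
       "double_vec (bimat_app ?A3 ?A4 (bimat_app A1 A2 x)) = matrix_inv ?D *v (?D *v double_vec x)"
    for x by (simp_all add: inv_double bimat_diamond_mult_double_vec)
  then have "double_vec (bimat_app A1 A2 (bimat_app ?A3 ?A4 x)) = double_vec x"
       "double_vec (bimat_app ?A3 ?A4 (bimat_app A1 A2 x)) = double_vec x" for x
    by (simp_all add: D_inv)
  then show ?thesis
    unfolding bimat_is_inverse_def using inj_double_vec by (auto dest: injD)
qed

theorem lemma1:
  fixes A1 A2 :: "complex ^ 'n ^ 'n"
  shows "(bimat_nonsingular A1 A2 \<longleftrightarrow> invertible (bimat_diamond A1 A2)) \<and>
         (invertible (bimat_diamond A1 A2) \<longrightarrow>
            bimat_is_inverse A1 A2
              (upper_block (matrix_inv (bimat_diamond A1 A2) ** id_zero_block))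
              (lower_block (matrix_inv (bimat_diamond A1 A2) ** id_zero_block)))"
  using invertible_bimat_diamond_if_bimat_is_inverse bimat_is_inverse_if_invertible_bimat_diamond
  unfolding bimat_nonsingular_def by blast

end
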